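(* Let $V=\{1,\dots,n\}$, $k\ge1$, $g>0$, $E_k=\{X\subseteq V:|X|\le k\}$, and let $\{o_X\}_{X\in E_k}$ be operators with $\sum_{X\in E_k:X\ni v}\|o_X\|\le g$ for all $v\in V$. Then for every subset $L\subseteq V$ and every $m\ge1$, $$\sum_{w\in\mathcal{G}_m^L}\frac{n_w}{m!}\prod_{s=1}^mN_{X_s|w_L}\|o_{X_s}\|\le\frac12e^{|L|/k}(2e^3gk)^m,$$ where for $w=\{X_1,\dots,X_m\}$ we write $w_L=\{L,X_1,\dots,X_m\}$.
   Context: A cluster is a multiset $w=\{X_1,\dots,X_m\}$ of elements of $E_k$, $|w|=m$; $\oplus$ denotes multiset union and $V_w=X_1\cup\dots\cup X_m$. $\mathcal{G}_m^L$ is the set of clusters $w$ with $|w|=m$ that are $L$-connected: there is no decomposition $w=w_1\oplus w_2$ with $w_2\ne\emptyset$ and $(L\cup V_{w_1})\cap V_{w_2}=\emptyset$. $n_w$ is the number of ordered tuples $(X_1,\dots,X_m)\in E_k^m$ whose underlying multiset is $w$ (i.e. $m!$ divided by the product of factorials of the multiplicities). $N_{X_s|w_L}=\#\{X\in w_L:X\ne X_s,\ X\cap X_s\ne\emptyset\}$. $\|\cdot\|$ is the operator norm. *)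

theory Defs
  imports "HOL-Analysis.Analysis" "HOL-Library.Multiset"
begin

definition Ek :: "nat \<Rightarrow> nat \<Rightarrow> nat set set" where
  "Ek n k = {X. X \<subseteq> {1..n} \<and> card X \<le> k}"

definition Vw :: "'a set multiset \<Rightarrow> 'a set" where
  "Vw w = \<Union> (set_mset w)"

definition L_connected :: "'a set \<Rightarrow> 'a set multiset \<Rightarrow> bool" where
  "L_connected L w \<longleftrightarrow>
     \<not> (\<exists>w1 w2. w = w1 + w2 \<and> w2 \<noteq> {#} \<and> (L \<union> Vw w1) \<inter> Vw w2 = {})"

definition Gcl :: "nat \<Rightarrow> nat \<Rightarrow> nat set \<Rightarrow> nat \<Rightarrow> nat set multiset set" where
  "Gcl n k L m = {w. size w = m \<and> set_mset w \<subseteq> Ek n k \<and> L_connected L w}"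

definition nw :: "'a multiset \<Rightarrow> nat" where
  "nw w = card {xs. length xs = size w \<and> mset xs = w}"

definition Ncount :: "'a set \<Rightarrow> 'a set multiset \<Rightarrow> nat" where
  "Ncount X wL = size (filter_mset (\<lambda>Y. Y \<noteq> X \<and> Y \<inter> X \<noteq> {}) wL)"

end

theory Submission
  imports Defs
begin

text \<open>Write a cluster as a labelling \<open>X\<close> of the vertices \<open>0, \<dots>, m - 1\<close> by sets in
  \<open>E\<^sub>k\<close> and give the extra vertex \<open>m\<close> the label \<open>L\<close>. Then \<open>N\<^bsub>X\<^sub>s|w\<^sub>L\<^esub>\<close> is at most the degree of
  \<open>s\<close> in the graph joining overlapping labels, and this graph is connected when \<open>w\<close> is
  \<open>L\<close>-connected. In a connected graph the product of the degrees is at most \<open>(2e)\<^sup>m\<close> times the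
  number of spanning trees rooted at \<open>m\<close>; this follows by induction, deleting a vertex of minimal
  degree in a minimal piece that hangs off the rest at a single vertex. Summing over all
  labellings, a rooted tree whose labels meet their parents' labels is built layer by layer
  from the root; a label meeting a set \<open>Y\<close> has total weight at most \<open>g |Y|\<close>, which leads to the
  bound \<open>m! (e g k)\<^sup>m e\<^bsup>|L|/k\<^esup>\<close>. Altogether the sum is at most
  \<open>e\<^bsup>|L|/k\<^esup> (2 e\<^sup>2 g k)\<^sup>m \<le> e\<^bsup>|L|/k\<^esup> (2 e\<^sup>3 g k)\<^sup>m / 2\<close>.\<close>

section \<open>Rooted forests\<close>

text \<open>Forests on \<open>V\<close> with roots in \<open>R\<close>, represented by their parent maps.\<close>
definition rooted_forests :: "'a set \<Rightarrow> 'a set \<Rightarrow> ('a \<Rightarrow> 'a) set" where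
  "rooted_forests V R = {p \<in> V \<rightarrow>\<^sub>E (V \<union> R). \<forall>v\<in>V. \<exists>n. (p ^^ n) v \<in> R}"

lemma finite_rooted_forests: "finite V \<Longrightarrow> finite R \<Longrightarrow> finite (rooted_forests V R)"
  unfolding rooted_forests_def
  by (rule finite_subset[of _ "V \<rightarrow>\<^sub>E (V \<union> R)"]) (auto intro!: finite_PiE)

lemma rooted_forests_empty [simp]: "rooted_forests {} R = {\<lambda>_. undefined}"
  unfolding rooted_forests_def by auto

lemma funpow_reaches_cong:
  assumes agree: "\<forall>x\<in>A. q x = p x" and maps: "\<forall>x\<in>A. p x \<in> A \<union> R"
    and "u \<in> A \<union> R" "(p ^^ n) u \<in> R"
  shows "\<exists>n'. (q ^^ n') u \<in> R"
  using assms(3,4)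
proof (induction n arbitrary: u)
  case 0
  then show ?case by (metis funpow_0)
next
  case (Suc n)
  show ?case
  proof (cases "u \<in> R")
    case True
    then show ?thesis by (metis funpow_0)
  next
    case False
    then have u: "u \<in> A" using Suc.prems by auto
    have "(p ^^ n) (p u) \<in> R" using Suc.prems(2) by (simp add: funpow_Suc_right del: funpow.simps)
    then obtain n' where "(q ^^ n') (p u) \<in> R" using Suc.IH maps u by blast
    then have "(q ^^ Suc n') u \<in> R" using agree u by (simp add: funpow_Suc_right del: funpow.simps)
    then show ?thesis by blast
  qed
qed

lemma rooted_forest_no_fixpoint:
  assumes "p \<in> rooted_forests V R" "v \<in> V" "V \<inter> R = {}"
  shows "p v \<noteq> v"
proof
  assume pv: "p v = v"
  have "(p ^^ n) v = v" for n by (induction n) (use pv in auto)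
  moreover obtain n where "(p ^^ n) v \<in> R" using assms unfolding rooted_forests_def by auto
  ultimately show False using assms by auto
qed

lemma rooted_forest_restrict:
  assumes p: "p \<in> rooted_forests I J" and IJ: "I \<inter> J = {}" and S: "S = {i \<in> I. p i \<in> J}"
  shows "restrict p (I - S) \<in> rooted_forests (I - S) S"
proof -
  let ?p = "restrict p (I - S)"
  have maps: "\<forall>i\<in>I. p i \<in> I \<union> J" using p unfolding rooted_forests_def by auto
  have "\<forall>i\<in>I. (p ^^ n) i \<in> J \<longrightarrow> (\<exists>k. (?p ^^ k) i \<in> S)" for n
  proof (induction n)
    case 0
    then show ?case using IJ by auto
  next
    case (Suc n)
    show ?case
    proof (intro ballI impI)
      fix i assume i: "i \<in> I" and reach: "(p ^^ Suc n) i \<in> J"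
      show "\<exists>k. (?p ^^ k) i \<in> S"
      proof (cases "i \<in> S")
        case True
        then show ?thesis by (metis funpow_0)
      next
        case False
        then have "p i \<in> I" using maps i S by auto
        moreover have "(p ^^ n) (p i) \<in> J" using reach by (simp add: funpow_Suc_right del: funpow.simps)
        ultimately obtain k where "(?p ^^ k) (p i) \<in> S" using Suc.IH by blast
        then have "(?p ^^ Suc k) i \<in> S" using i False by (simp add: funpow_Suc_right del: funpow.simps)
        then show ?thesis by blast
      qed
    qed
  qed
  then have "\<forall>i\<in>I - S. \<exists>k. (?p ^^ k) i \<in> S" using p unfolding rooted_forests_def by blast
  moreover have "?p \<in> (I - S) \<rightarrow>\<^sub>E ((I - S) \<union> S)" using maps S by auto
  ultimately show ?thesis unfolding rooted_forests_def by auto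
qed

lemma rooted_forest_has_root_child:
  assumes p: "p \<in> rooted_forests I J" and "I \<inter> J = {}" "I \<noteq> {}"
  shows "{i \<in> I. p i \<in> J} \<noteq> {}"
proof
  assume empty: "{i \<in> I. p i \<in> J} = {}"
  have "restrict p I \<in> rooted_forests I {}"
    using rooted_forest_restrict[OF p \<open>I \<inter> J = {}\<close> refl] unfolding empty by simp
  then show False using \<open>I \<noteq> {}\<close> unfolding rooted_forests_def by auto
qed

lemma rooted_forest_override:
  assumes q: "q \<in> S \<rightarrow>\<^sub>E J" and p: "p \<in> rooted_forests (I - S) S" and SI: "S \<subseteq> I"
    and IJ: "I \<inter> J = {}"
  shows "override_on p q S \<in> rooted_forests I J" "{i \<in> I. override_on p q S i \<in> J} = S"
proof -
  let ?f = "override_on p q S"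
  have pE: "p \<in> (I - S) \<rightarrow>\<^sub>E ((I - S) \<union> S)" using p unfolding rooted_forests_def by auto
  have "\<exists>n. (?f ^^ n) i \<in> J" if i: "i \<in> I" for i
  proof -
    obtain n where "(?f ^^ n) i \<in> S"
    proof (cases "i \<in> S")
      case True
      then show ?thesis using that[of 0] by simp
    next
      case False
      then obtain k where "(p ^^ k) i \<in> S" using p i unfolding rooted_forests_def by auto
      then show ?thesis using funpow_reaches_cong[of "I - S" ?f p S] pE i False that by auto
    qed
    then have "(?f ^^ Suc n) i \<in> J" using q by auto
    then show ?thesis by blast
  qed
  moreover have "?f \<in> I \<rightarrow>\<^sub>E (I \<union> J)"
    using q pE SI by (auto simp: override_on_def PiE_def Pi_def extensional_def)
  ultimately show "?f \<in> rooted_forests I J" unfolding rooted_forests_def by auto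
  have "?f i \<notin> J" if "i \<in> I - S" for i
    using pE that SI IJ by (auto simp: PiE_iff)
  then show "{i \<in> I. ?f i \<in> J} = S"
    using q SI by auto
qed

text \<open>\<open>S\<close> is the set of vertices whose parent is a root.\<close>
lemma sum_rooted_forests_by_top_layer:
  assumes fin: "finite I" "finite J" and IJ: "I \<inter> J = {}" and "I \<noteq> {}"
  shows "(\<Sum>p\<in>rooted_forests I J. F p) =
    (\<Sum>S\<in>Pow I - {{}}. \<Sum>q\<in>S \<rightarrow>\<^sub>E J. \<Sum>p\<in>rooted_forests (I - S) S. F (override_on p q S))"
proof -
  let ?top = "\<lambda>p. {i \<in> I. p i \<in> J}"
  have "(\<Sum>p\<in>rooted_forests I J. F p) =
      (\<Sum>S\<in>Pow I - {{}}. \<Sum>p\<in>{p \<in> rooted_forests I J. ?top p = S}. F p)"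
    by (rule sum.group[symmetric])
      (use finite_rooted_forests[OF fin] fin rooted_forest_has_root_child[OF _ IJ \<open>I \<noteq> {}\<close>] in auto)
  also have "\<dots> = (\<Sum>S\<in>Pow I - {{}}. \<Sum>q\<in>S \<rightarrow>\<^sub>E J. \<Sum>p\<in>rooted_forests (I - S) S. F (override_on p q S))"
  proof (rule sum.cong[OF refl])
    fix S assume S: "S \<in> Pow I - {{}}"
    have "(\<Sum>p\<in>{p \<in> rooted_forests I J. ?top p = S}. F p) =
        (\<Sum>qp\<in>(S \<rightarrow>\<^sub>E J) \<times> rooted_forests (I - S) S. F (override_on (snd qp) (fst qp) S))"
    proof (rule sum.reindex_bij_witness[where i = "\<lambda>qp. override_on (snd qp) (fst qp) S"
          and j = "\<lambda>p. (restrict p S, restrict p (I - S))"])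
      fix p assume p: "p \<in> {p \<in> rooted_forests I J. ?top p = S}"
      then have "p \<in> I \<rightarrow>\<^sub>E (I \<union> J)" unfolding rooted_forests_def by auto
      then have "override_on (restrict p (I - S)) (restrict p S) S = p"
        using S by (auto simp: PiE_def extensional_def fun_eq_iff override_on_def)
      then show "override_on (snd (restrict p S, restrict p (I - S))) (fst (restrict p S, restrict p (I - S))) S = p"
        and "F (override_on (snd (restrict p S, restrict p (I - S))) (fst (restrict p S, restrict p (I - S))) S) = F p"
        by simp_all
      show "(restrict p S, restrict p (I - S)) \<in> (S \<rightarrow>\<^sub>E J) \<times> rooted_forests (I - S) S"
        using rooted_forest_restrict[of p I J S] p IJ by auto
    next
      fix qp assume qp: "qp \<in> (S \<rightarrow>\<^sub>E J) \<times> rooted_forests (I - S) S"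
      then have q: "fst qp \<in> S \<rightarrow>\<^sub>E J" and p: "snd qp \<in> rooted_forests (I - S) S" by auto
      then have "snd qp \<in> (I - S) \<rightarrow>\<^sub>E ((I - S) \<union> S)" unfolding rooted_forests_def by auto
      then show "(restrict (override_on (snd qp) (fst qp) S) S, restrict (override_on (snd qp) (fst qp) S) (I - S)) = qp"
        using q by (cases qp) (auto simp: PiE_def extensional_def fun_eq_iff)
      show "override_on (snd qp) (fst qp) S \<in> {p \<in> rooted_forests I J. ?top p = S}"
        using rooted_forest_override[OF q p _ IJ] S by auto
    qed
    then show "(\<Sum>p\<in>{p \<in> rooted_forests I J. ?top p = S}. F p) =
        (\<Sum>q\<in>S \<rightarrow>\<^sub>E J. \<Sum>p\<in>rooted_forests (I - S) S. F (override_on p q S))"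
      by (simp only: sum.cartesian_product split_def)
  qed
  finally show ?thesis .
qed

section \<open>Degree products and spanning trees\<close>

definition spanning_trees :: "'a set \<Rightarrow> 'a \<Rightarrow> ('a \<Rightarrow> 'a \<Rightarrow> bool) \<Rightarrow> ('a \<Rightarrow> 'a) set" where
  "spanning_trees V r E = {p \<in> rooted_forests V {r}. \<forall>v\<in>V. E v (p v)}"

definition vertex_degree :: "'a set \<Rightarrow> 'a \<Rightarrow> ('a \<Rightarrow> 'a \<Rightarrow> bool) \<Rightarrow> 'a \<Rightarrow> nat" where
  "vertex_degree V r E v = card {u \<in> insert r V. E v u}"

definition reachable_in :: "'a set \<Rightarrow> ('a \<Rightarrow> 'a \<Rightarrow> bool) \<Rightarrow> ('a \<times> 'a) set" where
  "reachable_in W E = {(x, y). x \<in> W \<and> y \<in> W \<and> E x y}\<^sup>*"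

lemma finite_spanning_trees: "finite V \<Longrightarrow> finite (spanning_trees V r E)"
  unfolding spanning_trees_def using finite_rooted_forests[of V "{r}"] by auto

lemma card_spanning_trees_insert:
  assumes fin: "finite V" and v: "v \<notin> V" "v \<noteq> r" and irrefl: "\<forall>x. \<not> E x x"
  shows "card (spanning_trees V r E) * card {u \<in> insert r V. E v u} \<le> card (spanning_trees (insert v V) r E)"
proof -
  let ?N = "{u \<in> insert r V. E v u}"
  let ?attach = "\<lambda>(p, u). p(v := u)"
  have sub: "?attach ` (spanning_trees V r E \<times> ?N) \<subseteq> spanning_trees (insert v V) r E"
  proof
    fix t assume "t \<in> ?attach ` (spanning_trees V r E \<times> ?N)"
    then obtain p u where t: "t = p(v := u)" and p: "p \<in> spanning_trees V r E" and u: "u \<in> ?N"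
      by auto
    have pE: "p \<in> V \<rightarrow>\<^sub>E (V \<union> {r})" and reach: "\<forall>x\<in>V. \<exists>n. (p ^^ n) x \<in> {r}"
      and edges: "\<forall>x\<in>V. E x (p x)"
      using p unfolding spanning_trees_def rooted_forests_def by auto
    let ?t = "p(v := u)"
    have reach_t: "\<exists>n. (?t ^^ n) x \<in> {r}" if x: "x \<in> V \<union> {r}" for x
    proof (cases "x = r")
      case False
      then obtain n where "(p ^^ n) x \<in> {r}" using reach x by auto
      moreover have "\<forall>y\<in>V. ?t y = p y" "\<forall>y\<in>V. p y \<in> V \<union> {r}" using pE v by auto
      ultimately show ?thesis using x by (intro funpow_reaches_cong[of V ?t p "{r}" x n]) auto
    qed (metis funpow_0 singletonI)
    have "\<exists>n. (?t ^^ n) x \<in> {r}" if "x \<in> insert v V" for x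
    proof (cases "x = v")
      case True
      obtain n where "(?t ^^ n) u \<in> {r}" using reach_t u by auto
      then have "(?t ^^ Suc n) v \<in> {r}" by (simp add: funpow_Suc_right del: funpow.simps)
      then show ?thesis using True by blast
    qed (use reach_t that in auto)
    moreover have "?t \<in> insert v V \<rightarrow>\<^sub>E (insert v V \<union> {r})"
      using pE u v by (auto simp: PiE_def extensional_def Pi_def)
    moreover have "\<forall>x\<in>insert v V. E x (?t x)" using edges u v by auto
    ultimately show "t \<in> spanning_trees (insert v V) r E"
      unfolding spanning_trees_def rooted_forests_def t by auto
  qed
  have inj: "inj_on ?attach (spanning_trees V r E \<times> ?N)"
  proof (rule inj_onI, clarify)
    fix p u p' u'
    assume "p \<in> spanning_trees V r E" "p' \<in> spanning_trees V r E" and eq: "p(v := u) = p'(v := u')"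
    then have "p v = undefined" "p' v = undefined"
      using v unfolding spanning_trees_def rooted_forests_def by (auto simp: PiE_def extensional_def)
    then show "p = p' \<and> u = u'" using eq by (metis fun_upd_triv fun_upd_upd fun_upd_same)
  qed
  have "card (spanning_trees V r E) * card ?N = card (?attach ` (spanning_trees V r E \<times> ?N))"
    unfolding card_image[OF inj] card_cartesian_product ..
  also have "\<dots> \<le> card (spanning_trees (insert v V) r E)"
    by (rule card_mono[OF finite_spanning_trees sub]) (use fin in auto)
  finally show ?thesis .
qed

lemma reachable_in_mono: "W \<subseteq> W' \<Longrightarrow> reachable_in W E \<subseteq> reachable_in W' E"
  unfolding reachable_in_def by (rule rtrancl_mono) auto

lemma reachable_in_first_step:
  assumes "(s, r) \<in> reachable_in W E" "s \<noteq> r"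
  shows "\<exists>y\<in>W. E s y"
  using assms unfolding reachable_in_def by (auto elim: converse_rtranclE)

definition pendant_piece :: "'a set \<Rightarrow> ('a \<Rightarrow> 'a \<Rightarrow> bool) \<Rightarrow> 'a \<Rightarrow> 'a set \<Rightarrow> bool" where
  "pendant_piece W E c K \<longleftrightarrow> K \<noteq> {} \<and> K \<subseteq> W - {c} \<and> (\<forall>x\<in>K. \<forall>y\<in>W. E x y \<and> y \<noteq> c \<longrightarrow> y \<in> K)"

lemma reachable_in_Diff_pendant_piece:
  assumes sym: "\<forall>x y. E x y \<longrightarrow> E y x" and conn: "\<forall>y\<in>W. (y, r) \<in> reachable_in W E"
    and piece: "pendant_piece W E c K" and "r \<notin> K"
  shows "\<forall>y\<in>W - K. (y, r) \<in> reachable_in (W - K) E"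
proof -
  have "c \<notin> K" and closed: "\<forall>x\<in>K. \<forall>y\<in>W. E x y \<and> y \<noteq> c \<longrightarrow> y \<in> K"
    using piece unfolding pendant_piece_def by blast+
  let ?R = "{(x, y). x \<in> W \<and> y \<in> W \<and> E x y}"
  let ?R' = "{(x, y). x \<in> W - K \<and> y \<in> W - K \<and> E x y}"
  have "(z \<in> W - K \<longrightarrow> (z, r) \<in> ?R'\<^sup>*) \<and> (z \<in> K \<longrightarrow> (c, r) \<in> ?R'\<^sup>*)"
    if "(z, r) \<in> ?R\<^sup>*" for z
    using that
  proof (induction rule: converse_rtrancl_induct)
    case base
    then show ?case using \<open>r \<notin> K\<close> by auto
  next
    case (step z z')
    then have zz': "z \<in> W" "z' \<in> W" "E z z'" by auto
    show ?case
    proof (intro conjI impI)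
      assume z: "z \<in> W - K"
      show "(z, r) \<in> ?R'\<^sup>*"
      proof (cases "z' \<in> K")
        case True
        then have "z = c" using closed zz' sym z by blast
        then show ?thesis using step.IH True by auto
      next
        case False
        then have "(z, z') \<in> ?R'" using zz' z by auto
        then show ?thesis using step.IH False zz' by (meson Diff_iff converse_rtrancl_into_rtrancl)
      qed
    next
      assume z: "z \<in> K"
      show "(c, r) \<in> ?R'\<^sup>*"
        using step.IH closed zz' z by (cases "z' \<in> K") auto
    qed
  qed
  then show ?thesis using conn unfolding reachable_in_def by blast
qed

lemma unreachable_part_pendant:
  fixes V :: "'a set" and v r :: 'a and E :: "'a \<Rightarrow> 'a \<Rightarrow> bool"
  defines "K \<equiv> {u \<in> V - {v}. (u, r) \<notin> reachable_in (insert r (V - {v})) E}"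
  shows "\<forall>x\<in>K. \<forall>y\<in>insert r V. E x y \<and> y \<noteq> v \<longrightarrow> y \<in> K"
proof (intro ballI impI)
  fix x y assume x: "x \<in> K" and y: "y \<in> insert r V" and xy: "E x y \<and> y \<noteq> v"
  show "y \<in> K"
  proof (rule ccontr)
    assume "y \<notin> K"
    then have "(y, r) \<in> reachable_in (insert r (V - {v})) E"
      using y xy unfolding K_def reachable_in_def by auto
    moreover have "(x, y) \<in> {(a, b). a \<in> insert r (V - {v}) \<and> b \<in> insert r (V - {v}) \<and> E a b}"
      using x y xy unfolding K_def by auto
    ultimately have "(x, r) \<in> reachable_in (insert r (V - {v})) E"
      unfolding reachable_in_def by (meson converse_rtrancl_into_rtrancl)
    then show False using x unfolding K_def by auto
  qed
qed

text \<open>Take a pendant piece avoiding the root of minimal size: if deleting \<open>v \<in> K\<close> disconnected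
  some vertices, these would form a smaller pendant piece attached through \<open>v\<close>.\<close>
lemma removable_pendant_piece:
  assumes fin: "finite V" and "r \<notin> V" and sym: "\<forall>x y. E x y \<longrightarrow> E y x"
    and conn: "\<forall>v\<in>V. (v, r) \<in> reachable_in (insert r V) E" and "V \<noteq> {}"
  obtains c K where "pendant_piece (insert r V) E c K" "r \<notin> K"
    "\<forall>v\<in>K. \<forall>u\<in>V - {v}. (u, r) \<in> reachable_in (insert r (V - {v})) E"
proof -
  define W where "W = insert r V"
  define P where "P = (\<lambda>(c, K). pendant_piece W E c K \<and> r \<notin> K)"
  have "P (r, V)" unfolding P_def W_def pendant_piece_def using \<open>V \<noteq> {}\<close> \<open>r \<notin> V\<close> by auto
  then obtain cK where cK: "P cK" and cKmin: "\<forall>y. P y \<longrightarrow> card (snd cK) \<le> card (snd y)"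
    using ex_has_least_nat[of P "(r, V)" "\<lambda>x. card (snd x)"] by blast
  obtain c K where cKeq: "cK = (c, K)" by (cases cK)
  have piece: "pendant_piece W E c K" and "r \<notin> K" using cK unfolding cKeq P_def by auto
  then have KV: "K \<subseteq> V" unfolding pendant_piece_def W_def by blast
  have min: "card K \<le> card K'" if "pendant_piece W E c' K'" "r \<notin> K'" for c' K'
    using cKmin[rule_format, of "(c', K')"] that unfolding cKeq P_def by simp
  have outside: "\<forall>y\<in>W - K. (y, r) \<in> reachable_in (W - K) E"
    by (rule reachable_in_Diff_pendant_piece[OF sym _ piece \<open>r \<notin> K\<close>])
      (use conn in \<open>auto simp: W_def reachable_in_def\<close>)
  have "\<forall>u\<in>V - {v}. (u, r) \<in> reachable_in (insert r (V - {v})) E" if v: "v \<in> K" for v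
  proof (rule ccontr)
    define K' where "K' = {u \<in> V - {v}. (u, r) \<notin> reachable_in (insert r (V - {v})) E}"
    assume "\<not> ?thesis"
    then have "K' \<noteq> {}" unfolding K'_def by auto
    moreover have "K' \<subseteq> W - {v}" "r \<notin> K'" using \<open>r \<notin> V\<close> unfolding K'_def W_def by auto
    ultimately have "pendant_piece W E v K'"
      using unreachable_part_pendant[of V v r E] unfolding pendant_piece_def K'_def W_def by blast
    then have "card K \<le> card K'" using min \<open>r \<notin> K'\<close> by blast
    moreover have "K' \<subseteq> K - {v}"
    proof
      fix u assume u: "u \<in> K'"
      have "W - K \<subseteq> insert r (V - {v})" using v unfolding W_def by auto
      then have "u \<notin> W - K"
        using u outside reachable_in_mono unfolding K'_def by blast
      then show "u \<in> K - {v}" using u unfolding K'_def W_def by auto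
    qed
    then have "K' \<subset> K" using v by blast
    then have "card K' < card K" using fin KV by (meson finite_subset psubset_card_mono)
    ultimately show False by simp
  qed
  then show ?thesis using that piece \<open>r \<notin> K\<close> unfolding W_def by blast
qed

lemma prod_add_one_le_power_prod:
  fixes x :: "'a \<Rightarrow> real"
  assumes "\<forall>s\<in>A. 0 \<le> x s \<and> x s + 1 \<le> t * x s" "0 \<le> t"
  shows "(\<Prod>s\<in>A. x s + 1) \<le> t ^ card A * (\<Prod>s\<in>A. x s)"
proof -
  have "(\<Prod>s\<in>A. x s + 1) \<le> (\<Prod>s\<in>A. t * x s)"
    by (rule prod_mono) (use assms in auto)
  also have "\<dots> = t ^ card A * (\<Prod>s\<in>A. x s)" by (simp add: prod.distrib)
  finally show ?thesis .
qed

lemma one_plus_inverse_power_le_exp1: "(1 + 1 / real n) ^ n \<le> exp 1"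
proof -
  have "(1 + 1 / real n) ^ n \<le> exp (1 / real n) ^ n"
    by (rule power_mono) (auto simp: add.commute)
  also have "\<dots> = exp (real n * (1 / real n))" by (simp only: exp_of_nat_mult)
  also have "\<dots> \<le> exp 1" by (cases "n = 0") auto
  finally show ?thesis .
qed

text \<open>Every factor \<open>(x s + 1) / x s\<close> is at most \<open>d / (d - 1)\<close>, except the one at \<open>c\<close>, which is at
  most 2; and \<open>(d / (d - 1)) ^ (d - 1) \<le> e\<close>.\<close>
lemma prod_add_one_le_two_exp1_prod:
  fixes x :: "'a \<Rightarrow> real"
  assumes fin: "finite A" and card: "card A \<le> d" and ge1: "\<forall>s\<in>A. 1 \<le> x s"
    and big: "\<forall>s\<in>A - {c}. real d \<le> x s + 1"
  shows "(\<Prod>s\<in>A. x s + 1) \<le> 2 * exp 1 * (\<Prod>s\<in>A. x s)"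
proof -
  define t :: real where "t = (if d \<le> 1 then 2 else 1 + 1 / real (d - 1))"
  have t: "1 \<le> t" "t \<le> 2" unfolding t_def by auto
  have t_pow: "t ^ (d - 1) \<le> exp 1"
    using one_plus_inverse_power_le_exp1[of "d - 1"] by (auto simp: t_def)
  have step: "x s + 1 \<le> t * x s" if "s \<in> A - {c}" for s
  proof (cases "d \<le> 1")
    case False
    have "real d \<le> x s + 1" using big that by blast
    then have "real (d - 1) \<le> x s" using False by simp
    then have "1 \<le> x s / real (d - 1)" using False by auto
    then show ?thesis using False by (simp add: t_def algebra_simps)
  qed (use ge1 that in \<open>auto simp: t_def\<close>)
  have nonneg: "0 \<le> (\<Prod>s\<in>B. x s)" if "B \<subseteq> A" for B
    by (intro prod_nonneg) (use ge1 that in fastforce)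
  have rest: "(\<Prod>s\<in>A - {c}. x s + 1) \<le> t ^ card (A - {c}) * (\<Prod>s\<in>A - {c}. x s)"
    by (rule prod_add_one_le_power_prod) (use step ge1 t in auto)
  show ?thesis
  proof (cases "c \<in> A")
    case True
    have "card (A - {c}) \<le> d - 1" using card True fin by auto
    then have "t ^ card (A - {c}) \<le> exp 1" using t t_pow by (meson order.trans power_increasing)
    have "(\<Prod>s\<in>A. x s + 1) = (x c + 1) * (\<Prod>s\<in>A - {c}. x s + 1)"
      using True fin by (simp add: prod.remove)
    also have "\<dots> \<le> (2 * x c) * (exp 1 * (\<Prod>s\<in>A - {c}. x s))"
    proof (rule mult_mono)
      show "(\<Prod>s\<in>A - {c}. x s + 1) \<le> exp 1 * (\<Prod>s\<in>A - {c}. x s)"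
        using rest \<open>t ^ card (A - {c}) \<le> exp 1\<close> nonneg[of "A - {c}"]
        by (meson Diff_subset mult_right_mono order.trans)
    qed (use ge1 True in \<open>auto intro!: prod_nonneg\<close>)
    also have "\<dots> = 2 * exp 1 * (\<Prod>s\<in>A. x s)"
      using True fin by (simp add: prod.remove)
    finally show ?thesis .
  next
    case False
    have "t ^ card A \<le> t ^ Suc (d - 1)" using card t by (intro power_increasing) auto
    also have "\<dots> \<le> 2 * exp 1" using t t_pow by (simp add: mult_mono)
    finally have "t ^ card A \<le> 2 * exp 1" .
    then show ?thesis
      using rest False nonneg[of A] by (simp add: mult_right_mono order.trans)
  qed
qed

lemma vertex_degree_insert:
  assumes "finite V" "v \<notin> V" "v \<noteq> r"
  shows "vertex_degree (insert v V) r E s = vertex_degree V r E s + (if E s v then 1 else 0)"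
proof -
  have "{u \<in> insert r (insert v V). E s u} = insert v {u \<in> insert r V. E s u}" if "E s v"
    using that by auto
  moreover have "{u \<in> insert r (insert v V). E s u} = {u \<in> insert r V. E s u}" if "\<not> E s v"
    using that by auto
  ultimately show ?thesis using assms unfolding vertex_degree_def by auto
qed

lemma one_le_vertex_degree:
  assumes "finite V" "(s, r) \<in> reachable_in (insert r V) E" "s \<noteq> r"
  shows "1 \<le> vertex_degree V r E s"
proof -
  obtain y where "y \<in> insert r V" "E s y" using reachable_in_first_step[OF assms(2,3)] by blast
  then have "{u \<in> insert r V. E s u} \<noteq> {}" "finite {u \<in> insert r V. E s u}" using assms(1) by auto
  then show ?thesis unfolding vertex_degree_def by (simp add: Suc_le_eq card_gt_0_iff)
qed

lemma prod_vertex_degree_Diff_le: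
  assumes fin: "finite V" and v: "v \<in> V" "v \<noteq> r" and sym: "\<forall>x y. E x y \<longrightarrow> E y x"
    and low: "\<forall>s\<in>V - {v}. E v s \<and> s \<noteq> c \<longrightarrow> vertex_degree V r E v \<le> vertex_degree V r E s"
    and "r \<notin> V" and conn: "\<forall>u\<in>V - {v}. (u, r) \<in> reachable_in (insert r (V - {v})) E"
  shows "(\<Prod>s\<in>V - {v}. real (vertex_degree V r E s)) \<le> 2 * exp 1 * (\<Prod>s\<in>V - {v}. real (vertex_degree (V - {v}) r E s))"
proof -
  define V' where "V' = V - {v}"
  define A where "A = {s \<in> V'. E v s}"
  have V: "V = insert v V'" "v \<notin> V'" and finV': "finite V'" using v fin unfolding V'_def by auto
  have deg: "real (vertex_degree V r E s) = real (vertex_degree V' r E s) + (if s \<in> A then 1 else 0)" if "s \<in> V'" for s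
    using vertex_degree_insert[OF finV' \<open>v \<notin> V'\<close> \<open>v \<noteq> r\<close>, of E s] sym that unfolding A_def V by auto
  have AV': "A \<subseteq> V'" unfolding A_def by auto
  have finA: "finite A" using finV' AV' by (rule finite_subset[rotated])
  have "card A \<le> vertex_degree V r E v"
    unfolding vertex_degree_def A_def V'_def by (rule card_mono) (use fin in auto)
  moreover have "\<forall>s\<in>A. 1 \<le> real (vertex_degree V' r E s)"
  proof
    fix s assume "s \<in> A"
    then have "s \<in> V - {v}" "s \<noteq> r" using AV' \<open>r \<notin> V\<close> unfolding V'_def by auto
    then show "1 \<le> real (vertex_degree V' r E s)"
      using one_le_vertex_degree[OF finV', of s r E] conn unfolding V'_def by simp
  qed
  moreover have "\<forall>s\<in>A - {c}. real (vertex_degree V r E v) \<le> real (vertex_degree V' r E s) + 1"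
  proof
    fix s assume s: "s \<in> A - {c}"
    then have "real (vertex_degree V r E v) \<le> real (vertex_degree V r E s)"
      using low unfolding A_def V'_def by auto
    then show "real (vertex_degree V r E v) \<le> real (vertex_degree V' r E s) + 1"
      using deg[of s] s unfolding A_def by auto
  qed
  ultimately have key: "(\<Prod>s\<in>A. real (vertex_degree V' r E s) + 1) \<le> 2 * exp 1 * (\<Prod>s\<in>A. real (vertex_degree V' r E s))"
    by (rule prod_add_one_le_two_exp1_prod[OF finA])
  have "(\<Prod>s\<in>V'. real (vertex_degree V r E s)) =
      (\<Prod>s\<in>A. real (vertex_degree V r E s)) * (\<Prod>s\<in>V' - A. real (vertex_degree V r E s))"
    using prod.subset_diff[OF AV' finV'] by (simp add: mult.commute)
  also have "\<dots> = (\<Prod>s\<in>A. real (vertex_degree V' r E s) + 1) * (\<Prod>s\<in>V' - A. real (vertex_degree V' r E s))"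
    using deg AV' by (auto intro!: arg_cong2[where f = "(*)"] prod.cong)
  also have "\<dots> \<le> 2 * exp 1 * (\<Prod>s\<in>A. real (vertex_degree V' r E s)) * (\<Prod>s\<in>V' - A. real (vertex_degree V' r E s))"
    using key by (rule mult_right_mono) (auto intro: prod_nonneg)
  also have "\<dots> = 2 * exp 1 * (\<Prod>s\<in>V'. real (vertex_degree V' r E s))"
    using prod.subset_diff[OF AV' finV', of "\<lambda>s. real (vertex_degree V' r E s)"]
    by (simp add: mult.commute mult.left_commute)
  finally show ?thesis unfolding V'_def .
qed

lemma prod_vertex_degree_le_by_deletion:
  assumes fin: "finite V" and v: "v \<in> V" "v \<noteq> r" and "r \<notin> V"
    and sym: "\<forall>x y. E x y \<longrightarrow> E y x" and irrefl: "\<forall>x. \<not> E x x"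
    and low: "\<forall>s\<in>V - {v}. E v s \<and> s \<noteq> c \<longrightarrow> vertex_degree V r E v \<le> vertex_degree V r E s"
    and conn: "\<forall>u\<in>V - {v}. (u, r) \<in> reachable_in (insert r (V - {v})) E"
    and IH: "(\<Prod>s\<in>V - {v}. real (vertex_degree (V - {v}) r E s))
      \<le> (2 * exp 1) ^ card (V - {v}) * real (card (spanning_trees (V - {v}) r E))"
  shows "(\<Prod>s\<in>V. real (vertex_degree V r E s)) \<le> (2 * exp 1) ^ card V * real (card (spanning_trees V r E))"
proof -
  define V' where "V' = V - {v}"
  have V: "V = insert v V'" "v \<notin> V'" and "finite V'" using v fin unfolding V'_def by auto
  have "(\<Prod>s\<in>V. real (vertex_degree V r E s)) = real (vertex_degree V r E v) * (\<Prod>s\<in>V'. real (vertex_degree V r E s))"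
    using V \<open>finite V'\<close> by simp
  also have "\<dots> \<le> real (vertex_degree V r E v) * (2 * exp 1 * ((2 * exp 1) ^ card V' * real (card (spanning_trees V' r E))))"
  proof (rule mult_left_mono)
    have "(\<Prod>s\<in>V'. real (vertex_degree V r E s)) \<le> 2 * exp 1 * (\<Prod>s\<in>V'. real (vertex_degree V' r E s))"
      using prod_vertex_degree_Diff_le[OF fin v sym low \<open>r \<notin> V\<close> conn] unfolding V'_def .
    also have "\<dots> \<le> 2 * exp 1 * ((2 * exp 1) ^ card V' * real (card (spanning_trees V' r E)))"
      using IH unfolding V'_def by (rule mult_left_mono) simp
    finally show "(\<Prod>s\<in>V'. real (vertex_degree V r E s)) \<le> \<dots>" .
  qed simp
  also have "\<dots> = (2 * exp 1) ^ card V * real (card (spanning_trees V' r E) * vertex_degree V r E v)"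
    using V \<open>finite V'\<close> by (simp add: algebra_simps)
  also have "vertex_degree V r E v = card {u \<in> insert r V'. E v u}"
    unfolding vertex_degree_def V using irrefl by (intro arg_cong[where f = card]) auto
  also have "(2 * exp 1) ^ card V * real (card (spanning_trees V' r E) * \<dots>)
      \<le> (2 * exp 1) ^ card V * real (card (spanning_trees V r E))"
    using card_spanning_trees_insert[of V' v r E, OF \<open>finite V'\<close> \<open>v \<notin> V'\<close> \<open>v \<noteq> r\<close> irrefl] V
    by (intro mult_left_mono) (simp only: of_nat_le_iff, simp)
  finally show ?thesis .
qed

theorem prod_vertex_degree_le_card_spanning_trees:
  assumes "finite V" "r \<notin> V" "\<forall>x y. E x y \<longrightarrow> E y x" "\<forall>x. \<not> E x x"
    "\<forall>v\<in>V. (v, r) \<in> reachable_in (insert r V) E"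
  shows "(\<Prod>v\<in>V. real (vertex_degree V r E v)) \<le> (2 * exp 1) ^ card V * real (card (spanning_trees V r E))"
  using assms
proof (induction "card V" arbitrary: V rule: less_induct)
  case less
  note fin = less.prems(1) and rV = less.prems(2) and sym = less.prems(3) and irrefl = less.prems(4)
    and conn = less.prems(5)
  show ?case
  proof (cases "V = {}")
    case True
    then show ?thesis by (simp add: spanning_trees_def)
  next
    case False
    obtain c K where piece: "pendant_piece (insert r V) E c K" and "r \<notin> K"
      and removable: "\<forall>v\<in>K. \<forall>u\<in>V - {v}. (u, r) \<in> reachable_in (insert r (V - {v})) E"
      using removable_pendant_piece[OF fin rV sym conn False] by blast
    have "K \<noteq> {}" "K \<subseteq> V"
      using piece \<open>r \<notin> K\<close> unfolding pendant_piece_def by auto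
    then obtain v where v: "v \<in> K" and v_min: "\<forall>s\<in>K. vertex_degree V r E v \<le> vertex_degree V r E s"
      using ex_has_least_nat[of "\<lambda>x. x \<in> K" _ "vertex_degree V r E"] by blast
    have "v \<in> V" "v \<noteq> r" using v \<open>K \<subseteq> V\<close> rV by auto
    have conn': "\<forall>u\<in>V - {v}. (u, r) \<in> reachable_in (insert r (V - {v})) E"
      using removable v by blast
    have "(\<Prod>s\<in>V - {v}. real (vertex_degree (V - {v}) r E s))
        \<le> (2 * exp 1) ^ card (V - {v}) * real (card (spanning_trees (V - {v}) r E))"
      by (rule less.hyps[OF card_Diff1_less[OF fin \<open>v \<in> V\<close>] _ _ sym irrefl conn']) (use fin rV in auto)
    moreover have "\<forall>s\<in>V - {v}. E v s \<and> s \<noteq> c \<longrightarrow> vertex_degree V r E v \<le> vertex_degree V r E s"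
      using piece v v_min unfolding pendant_piece_def by blast
    ultimately show ?thesis
      by (intro prod_vertex_degree_le_by_deletion[OF fin \<open>v \<in> V\<close> \<open>v \<noteq> r\<close> rV sym irrefl _ conn'])
  qed
qed

section \<open>Sums over labelled forests\<close>

text \<open>\<open>override_on Y X I\<close> labels all vertices, the roots \<open>j\<close> by the fixed sets \<open>Y j\<close>; a labelled
  forest contributes only if every label meets the label of its parent.\<close>
definition forest_sum :: "'v set set \<Rightarrow> ('v set \<Rightarrow> real) \<Rightarrow> 'i set \<Rightarrow> 'i set \<Rightarrow> ('i \<Rightarrow> 'v set) \<Rightarrow> real" where
  "forest_sum B a I J Y = (\<Sum>X\<in>I \<rightarrow>\<^sub>E B. \<Sum>p\<in>rooted_forests I J.
      \<Prod>i\<in>I. a (X i) * of_bool (X i \<inter> override_on Y X I (p i) \<noteq> {}))"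

lemma sum_PiE_override:
  assumes "S \<subseteq> I"
  shows "(\<Sum>X\<in>I \<rightarrow>\<^sub>E B. G X) = (\<Sum>X\<in>S \<rightarrow>\<^sub>E B. \<Sum>X'\<in>(I - S) \<rightarrow>\<^sub>E B. G (override_on X' X S))"
proof -
  have "(\<Sum>X\<in>I \<rightarrow>\<^sub>E B. G X) = (\<Sum>XX'\<in>(S \<rightarrow>\<^sub>E B) \<times> ((I - S) \<rightarrow>\<^sub>E B). G (override_on (snd XX') (fst XX') S))"
  proof (rule sum.reindex_bij_witness[where i = "\<lambda>XX'. override_on (snd XX') (fst XX') S"
        and j = "\<lambda>X. (restrict X S, restrict X (I - S))"])
    fix X assume X: "X \<in> I \<rightarrow>\<^sub>E B"
    then have "override_on (restrict X (I - S)) (restrict X S) S = X"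
      using assms by (auto simp: PiE_def extensional_def fun_eq_iff override_on_def)
    then show "override_on (snd (restrict X S, restrict X (I - S))) (fst (restrict X S, restrict X (I - S))) S = X"
      and "G (override_on (snd (restrict X S, restrict X (I - S))) (fst (restrict X S, restrict X (I - S))) S) = G X"
      by simp_all
    show "(restrict X S, restrict X (I - S)) \<in> (S \<rightarrow>\<^sub>E B) \<times> ((I - S) \<rightarrow>\<^sub>E B)" using X assms by auto
  next
    fix XX' assume "XX' \<in> (S \<rightarrow>\<^sub>E B) \<times> ((I - S) \<rightarrow>\<^sub>E B)"
    then show "(restrict (override_on (snd XX') (fst XX') S) S, restrict (override_on (snd XX') (fst XX') S) (I - S)) = XX'"
      and "override_on (snd XX') (fst XX') S \<in> I \<rightarrow>\<^sub>E B"
      using assms by (cases XX', auto simp: PiE_def extensional_def fun_eq_iff override_on_def)+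
  qed
  then show ?thesis by (simp only: sum.cartesian_product split_def)
qed

lemma prod_override_forest:
  fixes X X' :: "'i \<Rightarrow> 'v set"
  assumes fin: "finite I" and SI: "S \<subseteq> I" and IJ: "I \<inter> J = {}"
    and q: "q \<in> S \<rightarrow>\<^sub>E J" and p: "p \<in> rooted_forests (I - S) S"
  defines "Z \<equiv> override_on X' X S"
  shows "(\<Prod>i\<in>I. a (Z i) * of_bool (Z i \<inter> override_on Y Z I (override_on p q S i) \<noteq> {}))
    = (\<Prod>i\<in>S. a (X i) * of_bool (X i \<inter> Y (q i) \<noteq> {})) *
      (\<Prod>i\<in>I - S. a (X' i) * of_bool (X' i \<inter> override_on X X' (I - S) (p i) \<noteq> {}))"
proof -
  let ?F = "\<lambda>i. a (Z i) * of_bool (Z i \<inter> override_on Y Z I (override_on p q S i) \<noteq> {})"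
  have p_maps: "p i \<in> I" if "i \<in> I - S" for i
    using p that SI unfolding rooted_forests_def by auto
  have "q i \<notin> I" if "i \<in> S" for i using q that IJ by auto
  then have "(\<Prod>i\<in>S. ?F i) = (\<Prod>i\<in>S. a (X i) * of_bool (X i \<inter> Y (q i) \<noteq> {}))"
    unfolding Z_def by (intro prod.cong) auto
  moreover have "(\<Prod>i\<in>I - S. ?F i)
      = (\<Prod>i\<in>I - S. a (X' i) * of_bool (X' i \<inter> override_on X X' (I - S) (p i) \<noteq> {}))"
    unfolding Z_def using p_maps by (intro prod.cong) (auto simp: override_on_def)
  moreover have "(\<Prod>i\<in>I. ?F i) = (\<Prod>i\<in>S. ?F i) * (\<Prod>i\<in>I - S. ?F i)"
    using prod.subset_diff[OF SI fin, of ?F] by (simp only: mult.commute)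
  ultimately show ?thesis by (simp only:)
qed

lemma forest_sum_by_top_layer:
  assumes fin: "finite I" "finite J" and IJ: "I \<inter> J = {}" and "I \<noteq> {}"
  shows "forest_sum B a I J Y = (\<Sum>S\<in>Pow I - {{}}. \<Sum>X\<in>S \<rightarrow>\<^sub>E B. \<Sum>q\<in>S \<rightarrow>\<^sub>E J.
      (\<Prod>i\<in>S. a (X i) * of_bool (X i \<inter> Y (q i) \<noteq> {})) * forest_sum B a (I - S) S X)"
proof -
  let ?T = "\<lambda>Z p. \<Prod>i\<in>I. a (Z i) * of_bool (Z i \<inter> override_on Y Z I (p i) \<noteq> {})"
  have "forest_sum B a I J Y = (\<Sum>S\<in>Pow I - {{}}. \<Sum>Z\<in>I \<rightarrow>\<^sub>E B. \<Sum>q\<in>S \<rightarrow>\<^sub>E J.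
      \<Sum>p\<in>rooted_forests (I - S) S. ?T Z (override_on p q S))"
    unfolding forest_sum_def sum_rooted_forests_by_top_layer[OF assms] by (rule sum.swap)
  also have "\<dots> = (\<Sum>S\<in>Pow I - {{}}. \<Sum>X\<in>S \<rightarrow>\<^sub>E B. \<Sum>q\<in>S \<rightarrow>\<^sub>E J.
      (\<Prod>i\<in>S. a (X i) * of_bool (X i \<inter> Y (q i) \<noteq> {})) * forest_sum B a (I - S) S X)"
  proof (rule sum.cong[OF refl])
    fix S assume "S \<in> Pow I - {{}}"
    then have SI: "S \<subseteq> I" by auto
    have "(\<Sum>Z\<in>I \<rightarrow>\<^sub>E B. \<Sum>q\<in>S \<rightarrow>\<^sub>E J. \<Sum>p\<in>rooted_forests (I - S) S. ?T Z (override_on p q S))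
        = (\<Sum>X\<in>S \<rightarrow>\<^sub>E B. \<Sum>X'\<in>(I - S) \<rightarrow>\<^sub>E B. \<Sum>q\<in>S \<rightarrow>\<^sub>E J. \<Sum>p\<in>rooted_forests (I - S) S.
            (\<Prod>i\<in>S. a (X i) * of_bool (X i \<inter> Y (q i) \<noteq> {})) *
            (\<Prod>i\<in>I - S. a (X' i) * of_bool (X' i \<inter> override_on X X' (I - S) (p i) \<noteq> {})))"
      unfolding sum_PiE_override[OF SI]
      by (intro sum.cong refl prod_override_forest[OF fin(1) SI IJ]) auto
    also have "\<dots> = (\<Sum>X\<in>S \<rightarrow>\<^sub>E B. \<Sum>q\<in>S \<rightarrow>\<^sub>E J.
        (\<Prod>i\<in>S. a (X i) * of_bool (X i \<inter> Y (q i) \<noteq> {})) * forest_sum B a (I - S) S X)"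
      unfolding forest_sum_def sum_distrib_left by (intro sum.cong refl sum.swap)
    finally show "(\<Sum>Z\<in>I \<rightarrow>\<^sub>E B. \<Sum>q\<in>S \<rightarrow>\<^sub>E J. \<Sum>p\<in>rooted_forests (I - S) S. ?T Z (override_on p q S))
        = (\<Sum>X\<in>S \<rightarrow>\<^sub>E B. \<Sum>q\<in>S \<rightarrow>\<^sub>E J.
            (\<Prod>i\<in>S. a (X i) * of_bool (X i \<inter> Y (q i) \<noteq> {})) * forest_sum B a (I - S) S X)" .
  qed
  finally show ?thesis .
qed

lemma sum_PiE_prod_meets_le:
  fixes a :: "'v set \<Rightarrow> real"
  assumes fin: "finite S" "finite J" "finite B" and a_nonneg: "\<forall>X. 0 \<le> a X"
    and meets: "\<forall>Y. Y \<subseteq> U \<longrightarrow> (\<Sum>X\<in>{X\<in>B. X \<inter> Y \<noteq> {}}. a X) \<le> g * real (card Y)"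
    and YU: "\<forall>j\<in>J. Y j \<subseteq> U"
  shows "(\<Sum>X\<in>S \<rightarrow>\<^sub>E B. \<Sum>q\<in>S \<rightarrow>\<^sub>E J. \<Prod>i\<in>S. a (X i) * of_bool (X i \<inter> Y (q i) \<noteq> {}))
    \<le> (g * (\<Sum>j\<in>J. real (card (Y j)))) ^ card S"
proof -
  define H where "H = (\<lambda>X. \<Sum>j\<in>J. a X * of_bool (X \<inter> Y j \<noteq> {}))"
  have "(\<Sum>q\<in>S \<rightarrow>\<^sub>E J. \<Prod>i\<in>S. a (X i) * of_bool (X i \<inter> Y (q i) \<noteq> {})) = (\<Prod>i\<in>S. H (X i))" for X
    unfolding H_def by (rule prod_sum_PiE[symmetric]) (use fin in auto)
  then have "(\<Sum>X\<in>S \<rightarrow>\<^sub>E B. \<Sum>q\<in>S \<rightarrow>\<^sub>E J. \<Prod>i\<in>S. a (X i) * of_bool (X i \<inter> Y (q i) \<noteq> {}))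
      = (\<Sum>X\<in>S \<rightarrow>\<^sub>E B. \<Prod>i\<in>S. H (X i))"
    by simp
  also have "\<dots> = (\<Prod>i\<in>S. \<Sum>X\<in>B. H X)"
    by (rule prod_sum_PiE[symmetric]) (use fin in auto)
  also have "\<dots> = (\<Sum>X\<in>B. H X) ^ card S" by simp
  also have "\<dots> \<le> (g * (\<Sum>j\<in>J. real (card (Y j)))) ^ card S"
  proof (rule power_mono)
    have "(\<Sum>X\<in>B. H X) = (\<Sum>j\<in>J. \<Sum>X\<in>{X\<in>B. X \<inter> Y j \<noteq> {}}. a X)"
      unfolding H_def using fin by (subst sum.swap) (simp add: Collect_conj_eq)
    also have "\<dots> \<le> (\<Sum>j\<in>J. g * real (card (Y j)))"
      by (rule sum_mono) (use meets YU in auto)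
    finally show "(\<Sum>X\<in>B. H X) \<le> g * (\<Sum>j\<in>J. real (card (Y j)))"
      by (simp add: sum_distrib_left)
    show "0 \<le> (\<Sum>X\<in>B. H X)" unfolding H_def using a_nonneg by (auto intro!: sum_nonneg)
  qed
  finally show ?thesis .
qed

lemma sum_Pow_card:
  assumes "finite I"
  shows "(\<Sum>S\<in>Pow I. f (card S)) = (\<Sum>j\<le>card I. of_nat (card I choose j) * f j)"
proof -
  have "(\<Sum>S\<in>Pow I. f (card S)) = (\<Sum>j\<le>card I. \<Sum>S\<in>{S \<in> Pow I. card S = j}. f (card S))"
    by (rule sum.group[symmetric]) (use assms in \<open>auto intro: card_mono\<close>)
  also have "\<dots> = (\<Sum>j\<le>card I. of_nat (card I choose j) * f j)"
  proof (rule sum.cong[OF refl])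
    fix j
    have "{S \<in> Pow I. card S = j} = {S. S \<subseteq> I \<and> card S = j}" by auto
    then show "(\<Sum>S\<in>{S \<in> Pow I. card S = j}. f (card S)) = of_nat (card I choose j) * f j"
      using n_subsets[OF assms, of j] by simp
  qed
  finally show ?thesis .
qed

lemma sum_power_div_fact_le_exp:
  fixes x :: real
  assumes "0 \<le> x"
  shows "(\<Sum>j\<le>n. x ^ j / fact j) \<le> exp x"
proof -
  have "(\<lambda>j. x ^ j / fact j) sums exp x"
    using exp_converges[of x] by (simp add: divide_inverse mult.commute)
  then show ?thesis
    using sum_le_suminf[of "\<lambda>j. x ^ j / fact j" "{..n}"] assms by (auto simp: sums_iff)
qed

lemma sum_binomial_fact_power_le:
  fixes M b :: real
  assumes "0 \<le> M" "0 \<le> b"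
  shows "(\<Sum>j\<le>N. real (N choose j) * ((M * b) ^ j * (fact (N - j) * M ^ (N - j))))
    \<le> fact N * M ^ N * exp b"
proof -
  have "real (N choose j) * ((M * b) ^ j * (fact (N - j) * M ^ (N - j))) = fact N * M ^ N * (b ^ j / fact j)"
    if "j \<le> N" for j
  proof -
    have "real (N choose j) * fact (N - j) = fact N / fact j"
      using that by (simp add: binomial_fact field_simps)
    moreover have "M ^ N = M ^ j * M ^ (N - j)"
      using that by (simp flip: power_add)
    ultimately show ?thesis by (simp add: field_simps)
  qed
  then have "(\<Sum>j\<le>N. real (N choose j) * ((M * b) ^ j * (fact (N - j) * M ^ (N - j))))
      = fact N * M ^ N * (\<Sum>j\<le>N. b ^ j / fact j)"
    by (simp add: sum_distrib_left)
  also have "\<dots> \<le> fact N * M ^ N * exp b"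
    using assms by (intro mult_left_mono sum_power_div_fact_le_exp) auto
  finally show ?thesis .
qed

lemma sum_top_layer_le:
  fixes a :: "'v set \<Rightarrow> real"
  assumes "finite S" "finite J" "finite B" and a_nonneg: "\<forall>X. 0 \<le> a X"
    and meets: "\<forall>Y. Y \<subseteq> U \<longrightarrow> (\<Sum>X\<in>{X\<in>B. X \<inter> Y \<noteq> {}}. a X) \<le> g * real (card Y)"
    and YU: "\<forall>j\<in>J. Y j \<subseteq> U" and B_small: "\<forall>X\<in>B. real (card X) \<le> k" and "0 < k" "0 \<le> C"
    and below: "\<forall>X\<in>S \<rightarrow>\<^sub>E B. F X \<le> C * exp ((\<Sum>j\<in>S. real (card (X j))) / k)"
  shows "(\<Sum>X\<in>S \<rightarrow>\<^sub>E B. \<Sum>q\<in>S \<rightarrow>\<^sub>E J. (\<Prod>i\<in>S. a (X i) * of_bool (X i \<inter> Y (q i) \<noteq> {})) * F X)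
    \<le> (exp 1 * g * (\<Sum>j\<in>J. real (card (Y j)))) ^ card S * C"
proof -
  let ?P = "\<lambda>X q. \<Prod>i\<in>S. a (X i) * of_bool (X i \<inter> Y (q i) \<noteq> {})"
  have "F X \<le> C * exp (card S)" if X: "X \<in> S \<rightarrow>\<^sub>E B" for X
  proof -
    have "(\<Sum>j\<in>S. real (card (X j))) \<le> (\<Sum>j\<in>S. k)"
      by (rule sum_mono) (use X B_small in auto)
    then have "(\<Sum>j\<in>S. real (card (X j))) / k \<le> real (card S)"
      using \<open>0 < k\<close> by (simp add: divide_le_eq)
    then have "C * exp ((\<Sum>j\<in>S. real (card (X j))) / k) \<le> C * exp (card S)"
      using \<open>0 \<le> C\<close> by (intro mult_left_mono) auto
    with below X show ?thesis by (meson order.trans)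
  qed
  then have "(\<Sum>X\<in>S \<rightarrow>\<^sub>E B. \<Sum>q\<in>S \<rightarrow>\<^sub>E J. ?P X q * F X) \<le> (\<Sum>X\<in>S \<rightarrow>\<^sub>E B. \<Sum>q\<in>S \<rightarrow>\<^sub>E J. ?P X q * (C * exp (card S)))"
    using a_nonneg by (intro sum_mono mult_left_mono) (auto intro: prod_nonneg)
  also have "\<dots> = (\<Sum>X\<in>S \<rightarrow>\<^sub>E B. \<Sum>q\<in>S \<rightarrow>\<^sub>E J. ?P X q) * (C * exp (card S))"
    by (simp add: sum_distrib_right)
  also have "\<dots> \<le> (g * (\<Sum>j\<in>J. real (card (Y j)))) ^ card S * (C * exp (card S))"
    using \<open>0 \<le> C\<close> by (intro mult_right_mono sum_PiE_prod_meets_le[OF assms(1-3) a_nonneg meets YU]) auto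
  also have "\<dots> = (exp 1 * g * (\<Sum>j\<in>J. real (card (Y j)))) ^ card S * C"
    using exp_of_nat_mult[of "card S" "1::real"] by (simp add: power_mult_distrib)
  finally show ?thesis .
qed

text \<open>Induction on \<open>|I|\<close> over the decomposition by the top layer \<open>S\<close>: the labels in \<open>S\<close> contribute
  at most \<open>e g \<beta>\<close> each, where \<open>\<beta>\<close> is the total size of the root labels, and the rest is a
  forest sum with roots \<open>S\<close>, whose labels have total size at most \<open>k |S|\<close>.\<close>
theorem forest_sum_le:
  fixes a :: "'v set \<Rightarrow> real" and Y :: "'i \<Rightarrow> 'v set"
  assumes "finite B" and a_nonneg: "\<forall>X. 0 \<le> a X" and B_small: "\<forall>X\<in>B. X \<subseteq> U \<and> real (card X) \<le> k"
    and meets: "\<forall>Y. Y \<subseteq> U \<longrightarrow> (\<Sum>X\<in>{X\<in>B. X \<inter> Y \<noteq> {}}. a X) \<le> g * real (card Y)"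
    and "0 \<le> g" "0 < k"
    and "finite I" "finite J" "I \<inter> J = {}" "\<forall>j\<in>J. Y j \<subseteq> U"
  shows "forest_sum B a I J Y \<le> fact (card I) * (exp 1 * g * k) ^ card I * exp ((\<Sum>j\<in>J. real (card (Y j))) / k)"
  using assms(7-10)
proof (induction "card I" arbitrary: I J Y rule: less_induct)
  case less
  note finI = less.prems(1) and finJ = less.prems(2) and IJ = less.prems(3) and YU = less.prems(4)
  define \<beta> where "\<beta> = (\<Sum>j\<in>J. real (card (Y j)))"
  define N where "N = card I"
  define M where "M = exp 1 * g * k"
  have "0 \<le> \<beta>" "0 \<le> M" unfolding \<beta>_def M_def using \<open>0 \<le> g\<close> \<open>0 < k\<close> by (auto intro: sum_nonneg)
  show ?case
  proof (cases "I = {}")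
    case True
    have "1 \<le> exp (\<beta> / k)" using \<open>0 \<le> \<beta>\<close> \<open>0 < k\<close> by simp
    then show ?thesis using True unfolding forest_sum_def \<beta>_def by simp
  next
    case False
    have layer: "(\<Sum>X\<in>S \<rightarrow>\<^sub>E B. \<Sum>q\<in>S \<rightarrow>\<^sub>E J. (\<Prod>i\<in>S. a (X i) * of_bool (X i \<inter> Y (q i) \<noteq> {})) * forest_sum B a (I - S) S X)
        \<le> (M * (\<beta> / k)) ^ card S * (fact (N - card S) * M ^ (N - card S))" if "S \<in> Pow I - {{}}" for S
    proof -
      have "S \<subseteq> I" "S \<noteq> {}" and finS: "finite S" using that finI by (auto intro: finite_subset)
      then have "I - S \<subset> I" by blast
      then have "card (I - S) < card I" by (rule psubset_card_mono[OF finI])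
      have "card (I - S) = N - card S" using \<open>S \<subseteq> I\<close> finS unfolding N_def by (simp add: card_Diff_subset)
      have "\<forall>X\<in>S \<rightarrow>\<^sub>E B. forest_sum B a (I - S) S X
          \<le> fact (N - card S) * M ^ (N - card S) * exp ((\<Sum>j\<in>S. real (card (X j))) / k)"
      proof
        fix X assume "X \<in> S \<rightarrow>\<^sub>E B"
        then show "forest_sum B a (I - S) S X
            \<le> fact (N - card S) * M ^ (N - card S) * exp ((\<Sum>j\<in>S. real (card (X j))) / k)"
          unfolding M_def \<open>card (I - S) = N - card S\<close>[symmetric]
          by (intro less.hyps[OF \<open>card (I - S) < card I\<close>]) (use finI finS B_small in auto)
      qed
      moreover have "M * (\<beta> / k) = exp 1 * g * \<beta>" using \<open>0 < k\<close> unfolding M_def by simp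
      ultimately show ?thesis
        using sum_top_layer_le[OF finS finJ \<open>finite B\<close> a_nonneg meets YU _ \<open>0 < k\<close>,
            of "fact (N - card S) * M ^ (N - card S)" "forest_sum B a (I - S) S"] B_small \<open>0 \<le> M\<close>
        unfolding \<beta>_def by simp
    qed
    have "forest_sum B a I J Y \<le> (\<Sum>S\<in>Pow I - {{}}. (M * (\<beta> / k)) ^ card S * (fact (N - card S) * M ^ (N - card S)))"
      unfolding forest_sum_by_top_layer[OF finI finJ IJ False] using layer by (intro sum_mono) auto
    also have "\<dots> \<le> (\<Sum>S\<in>Pow I. (M * (\<beta> / k)) ^ card S * (fact (N - card S) * M ^ (N - card S)))"
      using finI \<open>0 \<le> M\<close> \<open>0 \<le> \<beta>\<close> \<open>0 < k\<close> by (intro sum_mono2) auto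
    also have "\<dots> = (\<Sum>j\<le>N. real (N choose j) * ((M * (\<beta> / k)) ^ j * (fact (N - j) * M ^ (N - j))))"
      unfolding N_def by (rule sum_Pow_card[OF finI])
    also have "\<dots> \<le> fact N * M ^ N * exp (\<beta> / k)"
      using \<open>0 \<le> M\<close> \<open>0 \<le> \<beta>\<close> \<open>0 < k\<close> by (intro sum_binomial_fact_power_le) auto
    finally show ?thesis unfolding N_def M_def \<beta>_def .
  qed
qed

section \<open>Clusters\<close>

definition cluster_of :: "nat \<Rightarrow> (nat \<Rightarrow> 'a set) \<Rightarrow> 'a set multiset" where
  "cluster_of m X = image_mset X (mset_set {0..<m})"

text \<open>Vertices \<open>0, \<dots>, m - 1\<close> carry the sets \<open>X j\<close>, and the extra vertex \<open>m\<close> carries \<open>L\<close>.\<close>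
definition overlap_graph :: "nat \<Rightarrow> 'a set \<Rightarrow> (nat \<Rightarrow> 'a set) \<Rightarrow> nat \<Rightarrow> nat \<Rightarrow> bool" where
  "overlap_graph m L X j j' \<longleftrightarrow> j \<noteq> j' \<and>
     override_on (\<lambda>_. L) X {0..<m} j \<inter> override_on (\<lambda>_. L) X {0..<m} j' \<noteq> {}"

lemma Ncount_le_vertex_degree:
  assumes "i < m"
  shows "Ncount (X i) (add_mset L (cluster_of m X)) \<le> vertex_degree {0..<m} m (overlap_graph m L X) i"
proof -
  define P where "P = (\<lambda>Y. Y \<noteq> X i \<and> Y \<inter> X i \<noteq> {})"
  define D where "D = {u \<in> insert m {0..<m}. overlap_graph m L X i u}"
  have "size (filter_mset P (cluster_of m X)) = card {j \<in> {0..<m}. P (X j)}"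
    unfolding cluster_of_def filter_mset_image_mset by simp
  then have Ncount: "Ncount (X i) (add_mset L (cluster_of m X)) = card {j \<in> {0..<m}. P (X j)} + of_bool (P L)"
    unfolding Ncount_def P_def[symmetric] by simp
  have sub: "{j \<in> {0..<m}. P (X j)} \<subseteq> D" and m: "P L \<Longrightarrow> m \<in> D"
    unfolding D_def overlap_graph_def P_def using assms by auto
  have "finite D" unfolding D_def by auto
  show ?thesis
  proof (cases "P L")
    case True
    then have "insert m {j \<in> {0..<m}. P (X j)} \<subseteq> D" using sub m by auto
    then have "card (insert m {j \<in> {0..<m}. P (X j)}) \<le> card D" by (rule card_mono[OF \<open>finite D\<close>])
    then show ?thesis using True unfolding Ncount vertex_degree_def D_def by simp
  next
    case False
    then show ?thesis using card_mono[OF \<open>finite D\<close> sub] unfolding Ncount vertex_degree_def D_def by simp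
  qed
qed

text \<open>Vertices not reachable from \<open>m\<close> would split off a part of the cluster disjoint from \<open>L\<close> and
  from the rest.\<close>
lemma L_connected_imp_reachable_in:
  assumes "L_connected L (cluster_of m X)"
  shows "\<forall>v\<in>{0..<m}. (v, m) \<in> reachable_in (insert m {0..<m}) (overlap_graph m L X)"
proof (rule ccontr)
  let ?E = "overlap_graph m L X"
  define U where "U = {v \<in> {0..<m}. (v, m) \<notin> reachable_in (insert m {0..<m}) ?E}"
  define w1 where "w1 = image_mset X (filter_mset (\<lambda>j. j \<notin> U) (mset_set {0..<m}))"
  define w2 where "w2 = image_mset X (filter_mset (\<lambda>j. j \<in> U) (mset_set {0..<m}))"
  assume "\<not> ?thesis"
  then have "U \<noteq> {}" unfolding U_def by auto
  have split: "cluster_of m X = w1 + w2"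
    unfolding cluster_of_def w1_def w2_def by (metis image_mset_union multiset_partition add.commute)
  have w1: "set_mset w1 = X ` {j \<in> {0..<m}. j \<notin> U}" and w2: "set_mset w2 = X ` U"
    unfolding w1_def w2_def U_def by auto
  have "(L \<union> Vw w1) \<inter> Vw w2 = {}"
  proof (rule ccontr)
    assume "(L \<union> Vw w1) \<inter> Vw w2 \<noteq> {}"
    then obtain x u where u: "u \<in> U" and x: "x \<in> X u" "x \<in> L \<union> Vw w1"
      unfolding Vw_def w2 by auto
    have "u < m" using u unfolding U_def by auto
    obtain j where j: "j \<in> insert m {0..<m}" "(j, m) \<in> reachable_in (insert m {0..<m}) ?E" "?E u j"
    proof (cases "x \<in> L")
      case True
      then show ?thesis
        using that[of m] x \<open>u < m\<close> unfolding overlap_graph_def reachable_in_def by auto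
    next
      case False
      then obtain j where "j \<in> {0..<m}" "j \<notin> U" "x \<in> X j"
        using x unfolding Vw_def w1 by auto
      then show ?thesis
        using that[of j] x \<open>u < m\<close> u unfolding overlap_graph_def U_def by auto
    qed
    then have "(u, m) \<in> reachable_in (insert m {0..<m}) ?E"
      using \<open>u < m\<close> unfolding reachable_in_def by (auto intro: converse_rtrancl_into_rtrancl)
    then show False using u unfolding U_def by auto
  qed
  moreover have "w2 \<noteq> {#}" using \<open>U \<noteq> {}\<close> w2 by auto
  ultimately show False using assms split unfolding L_connected_def by blast
qed

lemma sum_meets_le_card:
  fixes a :: "'a set \<Rightarrow> real"
  assumes "finite B" "finite Y" and a_nonneg: "\<forall>X. 0 \<le> a X"
    and bound: "\<forall>v\<in>Y. (\<Sum>X\<in>{X\<in>B. v \<in> X}. a X) \<le> g"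
  shows "(\<Sum>X\<in>{X\<in>B. X \<inter> Y \<noteq> {}}. a X) \<le> g * real (card Y)"
proof -
  have "(\<Sum>X\<in>{X\<in>B. X \<inter> Y \<noteq> {}}. a X) \<le> (\<Sum>X\<in>B. \<Sum>v\<in>Y. a X * of_bool (v \<in> X))"
  proof (rule sum_le_included[where i = id])
    show "\<forall>X\<in>{X\<in>B. X \<inter> Y \<noteq> {}}. \<exists>X'\<in>B. id X' = X \<and> a X \<le> (\<Sum>v\<in>Y. a X' * of_bool (v \<in> X'))"
    proof
      fix X assume "X \<in> {X\<in>B. X \<inter> Y \<noteq> {}}"
      then obtain v where "X \<in> B" "v \<in> Y" "v \<in> X" by auto
      then have "a X \<le> (\<Sum>v\<in>Y. a X * of_bool (v \<in> X))"
        using member_le_sum[of v Y "\<lambda>v. a X * of_bool (v \<in> X)"] assms(2) a_nonneg by auto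
      then show "\<exists>X'\<in>B. id X' = X \<and> a X \<le> (\<Sum>v\<in>Y. a X' * of_bool (v \<in> X'))"
        using \<open>X \<in> B\<close> by auto
    qed
  qed (use assms a_nonneg in \<open>auto intro: sum_nonneg\<close>)
  also have "\<dots> = (\<Sum>v\<in>Y. \<Sum>X\<in>{X\<in>B. v \<in> X}. a X)"
    using assms(1) by (subst sum.swap) (simp add: Collect_conj_eq)
  also have "\<dots> \<le> (\<Sum>v\<in>Y. g)" by (rule sum_mono) (use bound in auto)
  finally show ?thesis by (simp add: mult.commute)
qed

lemma sum_nw_eq_sum_lists:
  assumes "finite B"
  shows "(\<Sum>w\<in>{w. size w = m \<and> set_mset w \<subseteq> B \<and> P w}. real (nw w) * F w)
    = (\<Sum>xs\<in>{xs. length xs = m \<and> set xs \<subseteq> B}. if P (mset xs) then F (mset xs) else 0)"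
proof -
  let ?All = "{xs. length xs = m \<and> set xs \<subseteq> B}"
  let ?Lists = "{xs \<in> ?All. P (mset xs)}"
  have fin: "finite ?All" using finite_lists_length_eq[OF assms, of m] by (simp add: conj_commute)
  then have "finite ?Lists" by (rule finite_subset[rotated]) auto
  have image: "mset ` ?Lists = {w. size w = m \<and> set_mset w \<subseteq> B \<and> P w}"
  proof
    show "{w. size w = m \<and> set_mset w \<subseteq> B \<and> P w} \<subseteq> mset ` ?Lists"
    proof
      fix w assume "w \<in> {w. size w = m \<and> set_mset w \<subseteq> B \<and> P w}"
      moreover obtain xs where "mset xs = w" using ex_mset by blast
      ultimately show "w \<in> mset ` ?Lists" by force
    qed
  qed auto
  have "(\<Sum>w\<in>{w. size w = m \<and> set_mset w \<subseteq> B \<and> P w}. real (nw w) * F w)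
      = (\<Sum>w\<in>mset ` ?Lists. \<Sum>xs\<in>{xs\<in>?Lists. mset xs = w}. F (mset xs))"
    unfolding image
  proof (rule sum.cong[OF refl])
    fix w assume "w \<in> {w. size w = m \<and> set_mset w \<subseteq> B \<and> P w}"
    then have "{xs\<in>?Lists. mset xs = w} = {xs. length xs = size w \<and> mset xs = w}"
      by (auto simp flip: size_mset)
    then show "real (nw w) * F w = (\<Sum>xs\<in>{xs\<in>?Lists. mset xs = w}. F (mset xs))"
      unfolding nw_def by simp
  qed
  also have "\<dots> = (\<Sum>xs\<in>?Lists. F (mset xs))"
    by (rule sum.image_gen[OF \<open>finite ?Lists\<close>, symmetric])
  also have "\<dots> = (\<Sum>xs\<in>?All. if P (mset xs) then F (mset xs) else 0)"
    by (rule sum.inter_filter[OF fin])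
  finally show ?thesis .
qed

lemma sum_lists_eq_sum_PiE:
  "(\<Sum>xs\<in>{xs. length xs = m \<and> set xs \<subseteq> B}. G (mset xs)) = (\<Sum>X\<in>{0..<m} \<rightarrow>\<^sub>E B. G (cluster_of m X))"
proof (rule sum.reindex_bij_witness[where i = "\<lambda>X. map X [0..<m]" and j = "\<lambda>xs. restrict (nth xs) {0..<m}"])
  fix xs assume xs: "xs \<in> {xs. length xs = m \<and> set xs \<subseteq> B}"
  then show "map (restrict (nth xs) {0..<m}) [0..<m] = xs" by (auto intro: nth_equalityI)
  moreover have "mset (map (restrict (nth xs) {0..<m}) [0..<m]) = cluster_of m (restrict (nth xs) {0..<m})"
    unfolding cluster_of_def by (simp only: mset_map mset_upt)
  ultimately show "G (cluster_of m (restrict (nth xs) {0..<m})) = G (mset xs)" by simp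
  show "restrict (nth xs) {0..<m} \<in> {0..<m} \<rightarrow>\<^sub>E B" using xs by auto
next
  fix X assume "X \<in> {0..<m} \<rightarrow>\<^sub>E B"
  then show "restrict (nth (map X [0..<m])) {0..<m} = X" and "map X [0..<m] \<in> {xs. length xs = m \<and> set xs \<subseteq> B}"
    by (auto simp: PiE_def extensional_def fun_eq_iff)
qed

lemma prod_mset_cluster_of: "(\<Prod>Y\<in>#cluster_of m X. f Y) = (\<Prod>i\<in>{0..<m}. f (X i))"
  unfolding cluster_of_def by (simp add: prod_unfold_prod_mset image_mset.compositionality o_def)

lemma prod_Ncount_le_card_spanning_trees:
  assumes "L_connected L (cluster_of m X)" and a_nonneg: "\<forall>Y. 0 \<le> a Y"
  shows "(\<Prod>Y\<in>#cluster_of m X. real (Ncount Y (add_mset L (cluster_of m X))) * a Y)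
    \<le> (2 * exp 1) ^ m * ((\<Prod>i\<in>{0..<m}. a (X i)) * real (card (spanning_trees {0..<m} m (overlap_graph m L X))))"
proof -
  let ?E = "overlap_graph m L X"
  have E_sym: "\<forall>x y. ?E x y \<longrightarrow> ?E y x" and E_irrefl: "\<forall>x. \<not> ?E x x"
    unfolding overlap_graph_def by blast+
  have "(\<Prod>Y\<in>#cluster_of m X. real (Ncount Y (add_mset L (cluster_of m X))) * a Y)
      \<le> (\<Prod>i\<in>{0..<m}. real (vertex_degree {0..<m} m ?E i) * a (X i))"
    unfolding prod_mset_cluster_of
  proof (rule prod_mono)
    fix i assume "i \<in> {0..<m}"
    then show "0 \<le> real (Ncount (X i) (add_mset L (cluster_of m X))) * a (X i) \<and>
        real (Ncount (X i) (add_mset L (cluster_of m X))) * a (X i) \<le> real (vertex_degree {0..<m} m ?E i) * a (X i)"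
      using Ncount_le_vertex_degree[of i m X L] a_nonneg by (simp add: mult_right_mono)
  qed
  also have "\<dots> = (\<Prod>i\<in>{0..<m}. real (vertex_degree {0..<m} m ?E i)) * (\<Prod>i\<in>{0..<m}. a (X i))"
    by (rule prod.distrib)
  also have "\<dots> \<le> ((2 * exp 1) ^ m * real (card (spanning_trees {0..<m} m ?E))) * (\<Prod>i\<in>{0..<m}. a (X i))"
  proof (rule mult_right_mono)
    show "(\<Prod>i\<in>{0..<m}. real (vertex_degree {0..<m} m ?E i)) \<le> (2 * exp 1) ^ m * real (card (spanning_trees {0..<m} m ?E))"
      using prod_vertex_degree_le_card_spanning_trees[of "{0..<m}" m ?E] E_sym E_irrefl
        L_connected_imp_reachable_in[OF assms(1)] by simp
  qed (use a_nonneg in \<open>simp add: prod_nonneg\<close>)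
  finally show ?thesis by (simp only: mult_ac)
qed

lemma prod_of_bool: "finite A \<Longrightarrow> (\<Prod>i\<in>A. of_bool (P i)) = (of_bool (\<forall>i\<in>A. P i) :: 'a::comm_semiring_1)"
  by (induction A rule: finite_induct) auto

lemma sum_card_spanning_trees_eq_forest_sum:
  "(\<Sum>X\<in>{0..<m} \<rightarrow>\<^sub>E B. (\<Prod>i\<in>{0..<m}. a (X i)) * real (card (spanning_trees {0..<m} m (overlap_graph m L X))))
    = forest_sum B a {0..<m} {m} (\<lambda>_. L)"
  unfolding forest_sum_def
proof (rule sum.cong[OF refl])
  fix X :: "nat \<Rightarrow> 'a set"
  let ?lab = "override_on (\<lambda>_. L) X {0..<m}"
  have "spanning_trees {0..<m} m (overlap_graph m L X)
      = {p \<in> rooted_forests {0..<m} {m}. \<forall>i\<in>{0..<m}. X i \<inter> ?lab (p i) \<noteq> {}}"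
  proof -
    have "overlap_graph m L X i (p i) \<longleftrightarrow> X i \<inter> ?lab (p i) \<noteq> {}"
      if "p \<in> rooted_forests {0..<m} {m}" "i \<in> {0..<m}" for p i
      using rooted_forest_no_fixpoint[OF that] that unfolding overlap_graph_def by auto
    then show ?thesis unfolding spanning_trees_def by auto
  qed
  moreover have "(\<Prod>i\<in>{0..<m}. a (X i) * of_bool (X i \<inter> ?lab (p i) \<noteq> {}))
      = (\<Prod>i\<in>{0..<m}. a (X i)) * of_bool (\<forall>i\<in>{0..<m}. X i \<inter> ?lab (p i) \<noteq> {})" for p
    by (simp add: prod.distrib prod_of_bool)
  ultimately show "(\<Prod>i\<in>{0..<m}. a (X i)) * real (card (spanning_trees {0..<m} m (overlap_graph m L X)))
      = (\<Sum>p\<in>rooted_forests {0..<m} {m}. \<Prod>i\<in>{0..<m}. a (X i) * of_bool (X i \<inter> ?lab (p i) \<noteq> {}))"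
    using finite_rooted_forests[of "{0..<m}" "{m}"]
    by (simp add: sum_distrib_left[symmetric] Collect_conj_eq del: Int_iff)
qed

lemma two_exp1_power_le_half:
  fixes x :: real
  assumes "1 \<le> m" "0 \<le> x"
  shows "(2 * exp 1) ^ m * (exp 1 * x) ^ m \<le> 1 / 2 * (2 * exp 3 * x) ^ m"
proof -
  have "exp (3::real) = exp 1 * exp 1 * exp 1" by (simp flip: exp_add)
  then have "2 * exp 3 * x = exp 1 * ((2 * exp 1) * (exp 1 * x))" by (simp only: mult_ac)
  then have pow: "(2 * exp 3 * x) ^ m = exp 1 ^ m * ((2 * exp 1) ^ m * (exp 1 * x) ^ m)"
    by (simp only: power_mult_distrib)
  have "(2::real) \<le> exp 1 ^ 1" using exp_ge_add_one_self[of 1] by simp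
  also have "\<dots> \<le> exp 1 ^ m" using assms(1) by (intro power_increasing) auto
  finally have "2 * ((2 * exp 1) ^ m * (exp 1 * x) ^ m) \<le> exp 1 ^ m * ((2 * exp 1) ^ m * (exp 1 * x) ^ m)"
    using assms(2) by (intro mult_right_mono) auto
  then show ?thesis unfolding pow by simp
qed

lemma finite_Ek: "finite (Ek n k)"
  unfolding Ek_def by (rule finite_subset[of _ "Pow {1..n}"]) auto

lemma sum_Gcl_eq_sum_PiE:
  "(\<Sum>w\<in>Gcl n k L m. real (nw w) / fact m * F w)
    = (\<Sum>X\<in>{0..<m} \<rightarrow>\<^sub>E Ek n k. if L_connected L (cluster_of m X) then F (cluster_of m X) else 0) / fact m"
proof -
  have "(\<Sum>w\<in>Gcl n k L m. real (nw w) / fact m * F w) = (\<Sum>w\<in>Gcl n k L m. real (nw w) * F w) / fact m"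
    by (simp add: sum_divide_distrib)
  also have "\<dots> = (\<Sum>X\<in>{0..<m} \<rightarrow>\<^sub>E Ek n k. if L_connected L (cluster_of m X) then F (cluster_of m X) else 0) / fact m"
    unfolding Gcl_def sum_nw_eq_sum_lists[OF finite_Ek]
    by (rule arg_cong[where f = "\<lambda>x. x / fact m"], rule sum_lists_eq_sum_PiE)
  finally show ?thesis .
qed

lemma forest_sum_Ek_le:
  assumes "1 \<le> k" "0 \<le> g" "\<forall>X. 0 \<le> a X" and "L \<subseteq> {1..n}"
    and "\<forall>v\<in>{1..n}. (\<Sum>X\<in>{X\<in>Ek n k. v \<in> X}. a X) \<le> g"
  shows "forest_sum (Ek n k) a {0..<m} {m} (\<lambda>_. L) \<le> fact m * (exp 1 * g * real k) ^ m * exp (real (card L) / real k)"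
proof -
  have "\<forall>X\<in>Ek n k. X \<subseteq> {1..n} \<and> real (card X) \<le> real k" unfolding Ek_def by auto
  moreover have "\<forall>Y. Y \<subseteq> {1..n} \<longrightarrow> (\<Sum>X\<in>{X\<in>Ek n k. X \<inter> Y \<noteq> {}}. a X) \<le> g * real (card Y)"
    using assms(3,5) by (auto intro!: sum_meets_le_card[OF finite_Ek] intro: finite_subset)
  ultimately show ?thesis
    using forest_sum_le[OF finite_Ek, where U = "{1..n}" and k = "real k" and I = "{0..<m}" and J = "{m}"] assms by simp
qed

theorem proposition4:
  fixes n k :: nat and g :: real
    and ops :: "nat set \<Rightarrow> ('b::real_normed_vector \<Rightarrow>\<^sub>L 'b)"
    and L :: "nat set" and m :: nat
  assumes "k \<ge> 1" and "g > 0"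
    and "\<forall>v\<in>{1..n}. (\<Sum>X\<in>{X\<in>Ek n k. v \<in> X}. norm (ops X)) \<le> g"
    and "L \<subseteq> {1..n}" and "m \<ge> 1"
  shows "(\<Sum>w\<in>Gcl n k L m. real (nw w) / fact m *
            (\<Prod>X\<in>#w. real (Ncount X (add_mset L w)) * norm (ops X)))
         \<le> 1/2 * exp (real (card L) / real k) * (2 * exp 3 * g * real k) ^ m"
proof -
  let ?a = "\<lambda>X. norm (ops X)"
  let ?F = "\<lambda>w. \<Prod>X\<in>#w. real (Ncount X (add_mset L w)) * ?a X"
  let ?T = "\<lambda>X. (\<Prod>i\<in>{0..<m}. ?a (X i)) * real (card (spanning_trees {0..<m} m (overlap_graph m L X)))"
  have "(\<Sum>w\<in>Gcl n k L m. real (nw w) / fact m * ?F w)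
      = (\<Sum>X\<in>{0..<m} \<rightarrow>\<^sub>E Ek n k. if L_connected L (cluster_of m X) then ?F (cluster_of m X) else 0) / fact m"
    by (rule sum_Gcl_eq_sum_PiE)
  also have "\<dots> \<le> (\<Sum>X\<in>{0..<m} \<rightarrow>\<^sub>E Ek n k. (2 * exp 1) ^ m * ?T X) / fact m"
    using prod_Ncount_le_card_spanning_trees[of L m _ ?a]
    by (intro divide_right_mono sum_mono) (auto intro!: mult_nonneg_nonneg prod_nonneg)
  also have "\<dots> = (2 * exp 1) ^ m * forest_sum (Ek n k) ?a {0..<m} {m} (\<lambda>_. L) / fact m"
    by (simp add: sum_distrib_left[symmetric] sum_card_spanning_trees_eq_forest_sum[where a = ?a])
  also have "\<dots> \<le> (2 * exp 1) ^ m * (fact m * (exp 1 * g * real k) ^ m * exp (real (card L) / real k)) / fact m"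
    using forest_sum_Ek_le[of k g ?a L n m] assms by (intro divide_right_mono mult_left_mono) auto
  also have "\<dots> = exp (real (card L) / real k) * ((2 * exp 1) ^ m * (exp 1 * (g * real k)) ^ m)"
    by (simp add: mult_ac)
  also have "\<dots> \<le> exp (real (card L) / real k) * (1 / 2 * (2 * exp 3 * (g * real k)) ^ m)"
    using assms by (intro mult_left_mono two_exp1_power_le_half) auto
  finally show ?thesis by (simp add: mult_ac)
qed

end
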